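(* Let $q$ be a prime and let $C\subseteq GF(q)^n$ be an affine subspace (affine code) such that $C\subseteq\mathcal{A}_{i_1}\cup\dots\cup\mathcal{A}_{i_k}$ for some weights $i_1,\dots,i_k$. Then $|C|\le q^n/L(n,q,i_1,\dots,i_k)$.
   Context: The weight ${\rm wt}(x)$ of $x\in GF(q)^n$ is the number of nonzero coordinates, and $\mathcal{A}_i=\{x\in GF(q)^n:{\rm wt}(x)=i\}$. For $f:GF(q)^n\to\mathbb{C}$ the Fourier transform is $\widehat{f}(z)=q^{-n/2}\sum_{x}f(x)\,\omega^{(x,z)}$ with $\omega=e^{2\pi i/q}$ and $(x,z)=\sum_i x_iz_i$ (computed in $\mathbb{Z}_q$). The support of a function is the set of arguments where it is nonzero. $L(n,q,i_1,\dots,i_k)$ is the minimum of $|{\rm supp}(f)|$ over all functions $f:GF(q)^n\to\mathbb{C}$, not identically zero, with ${\rm supp}(\widehat{f})\subseteq\mathcal{A}_{i_1}\cup\dots\cup\mathcal{A}_{i_k}$. *)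

theory Defs
  imports Complex_Main "HOL-Computational_Algebra.Primes"
begin

text \<open>GF(q)^n for prime q: vectors x :: nat => int with entries in {0..q-1}
  at coordinates i < n and 0 elsewhere (canonical representatives).\<close>
definition gfspace :: "nat \<Rightarrow> nat \<Rightarrow> (nat \<Rightarrow> int) set" where
  "gfspace n q = {x. (\<forall>i<n. 0 \<le> x i \<and> x i < int q) \<and> (\<forall>i\<ge>n. x i = 0)}"

definition wt :: "nat \<Rightarrow> (nat \<Rightarrow> int) \<Rightarrow> nat" where
  "wt n x = card {i. i < n \<and> x i \<noteq> 0}"

definition ip :: "nat \<Rightarrow> nat \<Rightarrow> (nat \<Rightarrow> int) \<Rightarrow> (nat \<Rightarrow> int) \<Rightarrow> int" where
  "ip n q x z = (\<Sum>i<n. x i * z i) mod int q"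

definition omega_pow :: "nat \<Rightarrow> int \<Rightarrow> complex" where
  "omega_pow q k = exp (2 * pi * \<i> * of_int k / of_nat q)"

definition fourier :: "nat \<Rightarrow> nat \<Rightarrow> ((nat \<Rightarrow> int) \<Rightarrow> complex) \<Rightarrow> (nat \<Rightarrow> int) \<Rightarrow> complex" where
  "fourier n q f z = complex_of_real (real q powr (- real n / 2)) *
     (\<Sum>x\<in>gfspace n q. f x * omega_pow q (ip n q x z))"

definition fsupp :: "nat \<Rightarrow> nat \<Rightarrow> ((nat \<Rightarrow> int) \<Rightarrow> complex) \<Rightarrow> (nat \<Rightarrow> int) set" where
  "fsupp n q f = {x \<in> gfspace n q. f x \<noteq> 0}"

definition weight_union :: "nat \<Rightarrow> nat \<Rightarrow> nat set \<Rightarrow> (nat \<Rightarrow> int) set" where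
  "weight_union n q I = {x \<in> gfspace n q. wt n x \<in> I}"

definition Lmin :: "nat \<Rightarrow> nat \<Rightarrow> nat set \<Rightarrow> nat" where
  "Lmin n q I = Inf {card (fsupp n q f) | f.
      fsupp n q f \<noteq> {} \<and> fsupp n q (fourier n q f) \<subseteq> weight_union n q I}"

definition gf_subspace :: "nat \<Rightarrow> nat \<Rightarrow> (nat \<Rightarrow> int) set \<Rightarrow> bool" where
  "gf_subspace n q V \<longleftrightarrow> V \<subseteq> gfspace n q \<and> (\<lambda>i. 0) \<in> V \<and>
     (\<forall>x\<in>V. \<forall>y\<in>V. (\<lambda>i. (x i + y i) mod int q) \<in> V) \<and>
     (\<forall>a\<in>{0..<int q}. \<forall>x\<in>V. (\<lambda>i. (a * x i) mod int q) \<in> V)"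

definition affine_code :: "nat \<Rightarrow> nat \<Rightarrow> (nat \<Rightarrow> int) set \<Rightarrow> bool" where
  "affine_code n q C \<longleftrightarrow> (\<exists>c\<in>gfspace n q. \<exists>V. gf_subspace n q V \<and>
     C = (\<lambda>v. (\<lambda>i. (c i + v i) mod int q)) ` V)"

end

theory Submission
  imports Defs "HOL-Analysis.Complex_Transcendental"
begin

text \<open>Write C = c + V with V a subgroup of GF(q)^n and let f(x) = \<Sum>_{y \<in> C} \<omega>^{-(y,x)}.
  By orthogonality of characters, f vanishes outside the dual code V^\<bottom>, and its Fourier transform
  is supported on C, hence on the prescribed weights. So L \<le> |supp f| \<le> |V^\<bottom>| = q^n / |V| = q^n / |C|.\<close>

lemma omega_pow_add: "omega_pow q (a + b) = omega_pow q a * omega_pow q b"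
  unfolding omega_pow_def by (simp add: distrib_left add_divide_distrib exp_add)

lemma omega_pow_eq_1_iff:
  assumes "q > 0"
  shows "omega_pow q a = 1 \<longleftrightarrow> int q dvd a"
proof -
  have "omega_pow q a = exp (\<i> * complex_of_real (2 * pi * a / q))"
    unfolding omega_pow_def by (simp add: field_simps)
  then have "omega_pow q a = 1 \<longleftrightarrow> (\<exists>k::int. 2 * pi * a / q = of_int (2 * k) * pi)"
    by (simp add: exp_eq_1)
  also have "\<dots> \<longleftrightarrow> (\<exists>k::int. real_of_int a = of_int k * real q)"
    using assms pi_gt_zero by (simp add: field_simps)
  also have "\<dots> \<longleftrightarrow> (\<exists>k::int. a = k * int q)"
    by (metis of_int_eq_iff of_int_mult of_int_of_nat_eq)
  finally show ?thesis by (auto simp: dvd_def mult.commute)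
qed

lemma omega_pow_zero [simp]: "omega_pow q 0 = 1"
  unfolding omega_pow_def by simp

lemma omega_pow_cong:
  assumes "q > 0" "a mod int q = b mod int q"
  shows "omega_pow q a = omega_pow q b"
proof -
  have "omega_pow q (a - b) = 1"
    using assms by (simp add: omega_pow_eq_1_iff mod_eq_dvd_iff)
  then show ?thesis using omega_pow_add[of q b "a - b"] by simp
qed

definition gf_add :: "nat \<Rightarrow> (nat \<Rightarrow> int) \<Rightarrow> (nat \<Rightarrow> int) \<Rightarrow> nat \<Rightarrow> int" where
  "gf_add q x y = (\<lambda>i. (x i + y i) mod int q)"

definition dot :: "nat \<Rightarrow> (nat \<Rightarrow> int) \<Rightarrow> (nat \<Rightarrow> int) \<Rightarrow> int" where
  "dot n x z = (\<Sum>i<n. x i * z i)"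

lemma dot_commute: "dot n x z = dot n z x"
  unfolding dot_def by (simp add: mult.commute)

lemma dot_diff_right: "dot n x (\<lambda>i. z i - y i) = dot n x z - dot n x y"
  unfolding dot_def by (simp add: right_diff_distrib sum_subtractf)

lemma dot_gf_add_mod: "dot n (gf_add q a b) z mod int q = (dot n a z + dot n b z) mod int q"
proof -
  have "dot n (gf_add q a b) z mod int q = (\<Sum>i<n. ((a i + b i) mod int q * z i) mod int q) mod int q"
    unfolding dot_def gf_add_def by (rule mod_sum_eq[symmetric])
  also have "\<dots> = (\<Sum>i<n. ((a i + b i) * z i) mod int q) mod int q"
    by (simp add: mod_mult_left_eq)
  also have "\<dots> = (dot n a z + dot n b z) mod int q"
    unfolding dot_def by (simp add: mod_sum_eq sum.distrib distrib_right)
  finally show ?thesis .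
qed

lemma omega_pow_dot_gf_add:
  assumes "q > 0"
  shows "omega_pow q (dot n (gf_add q a b) z) = omega_pow q (dot n a z) * omega_pow q (dot n b z)"
  using omega_pow_cong[OF assms dot_gf_add_mod] by (simp add: omega_pow_add)

lemma omega_pow_minus_dot_gf_add:
  assumes "q > 0"
  shows "omega_pow q (- dot n (gf_add q a b) z) = omega_pow q (- dot n a z) * omega_pow q (- dot n b z)"
proof -
  have "(- dot n (gf_add q a b) z) mod int q = (- dot n a z + - dot n b z) mod int q"
    using mod_minus_cong[OF dot_gf_add_mod] by simp
  then have "omega_pow q (- dot n (gf_add q a b) z) = omega_pow q (- dot n a z + - dot n b z)"
    by (rule omega_pow_cong[OF assms])
  then show ?thesis by (simp only: omega_pow_add)
qed

lemma gfspace_eq_image_PiE: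
  "gfspace n q = (\<lambda>f i. if i < n then f i else 0) ` (\<Pi>\<^sub>E i\<in>{..<n}. {0..<int q})"
proof (intro equalityI subsetI)
  fix x assume x: "x \<in> gfspace n q"
  then have "x = (\<lambda>i. if i < n then restrict x {..<n} i else 0)"
    unfolding gfspace_def by auto
  moreover have "restrict x {..<n} \<in> (\<Pi>\<^sub>E i\<in>{..<n}. {0..<int q})"
    using x unfolding gfspace_def by auto
  ultimately show "x \<in> (\<lambda>f i. if i < n then f i else 0) ` (\<Pi>\<^sub>E i\<in>{..<n}. {0..<int q})"
    by blast
qed (auto simp: gfspace_def PiE_def Pi_def)

lemma finite_gfspace [simp]: "finite (gfspace n q)"
  unfolding gfspace_eq_image_PiE by (intro finite_imageI finite_PiE) auto

lemma card_gfspace: "card (gfspace n q) = q ^ n"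
proof -
  have "inj_on (\<lambda>f i. if i < n then f i else 0) (\<Pi>\<^sub>E i\<in>{..<n}. {0..<int q})"
  proof (rule inj_onI)
    fix f g assume f: "f \<in> (\<Pi>\<^sub>E i\<in>{..<n}. {0..<int q})" and g: "g \<in> (\<Pi>\<^sub>E i\<in>{..<n}. {0..<int q})"
      and eq: "(\<lambda>i. if i < n then f i else 0) = (\<lambda>i. if i < n then g i else 0)"
    show "f = g"
    proof (rule PiE_ext[OF f g])
      fix i assume "i \<in> {..<n}"
      then show "f i = g i" using fun_cong[OF eq, of i] by simp
    qed
  qed
  then show ?thesis
    unfolding gfspace_eq_image_PiE by (simp add: card_image card_PiE)
qed

lemma gf_add_in_gfspace: "q > 0 \<Longrightarrow> x \<in> gfspace n q \<Longrightarrow> y \<in> gfspace n q \<Longrightarrow> gf_add q x y \<in> gfspace n q"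
  unfolding gfspace_def gf_add_def by auto

lemma mod_gfspace [simp]: "x \<in> gfspace n q \<Longrightarrow> x i mod int q = x i"
  unfolding gfspace_def by (cases "i < n") auto

lemma inj_on_gf_add: "x \<in> gfspace n q \<Longrightarrow> inj_on (gf_add q x) (gfspace n q)"
proof (rule inj_onI)
  fix y y' assume "x \<in> gfspace n q" "y \<in> gfspace n q" "y' \<in> gfspace n q" "gf_add q x y = gf_add q x y'"
  then have "y i mod int q = y' i mod int q" for i
    using mod_diff_cong[of "x i + y i" q "x i + y' i" "x i" "x i"]
    unfolding gf_add_def fun_eq_iff by simp
  with \<open>y \<in> gfspace n q\<close> \<open>y' \<in> gfspace n q\<close> show "y = y'"
    by (simp add: fun_eq_iff)
qed

lemma sum_eq_0_if_shift_scales: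
  fixes g :: "'a \<Rightarrow> 'b::idom"
  assumes "bij_betw t W W" "\<And>w. w \<in> W \<Longrightarrow> g (t w) = c * g w" "c \<noteq> 1"
  shows "sum g W = 0"
proof -
  have "sum g W = (\<Sum>w\<in>W. g (t w))"
    by (rule sum.reindex_bij_betw[OF assms(1), symmetric])
  also have "\<dots> = c * sum g W"
    using assms(2) by (simp add: sum_distrib_left)
  finally have "(1 - c) * sum g W = 0"
    by (simp add: algebra_simps)
  with assms(3) show ?thesis by simp
qed

definition gf_subgroup :: "nat \<Rightarrow> nat \<Rightarrow> (nat \<Rightarrow> int) set \<Rightarrow> bool" where
  "gf_subgroup n q W \<longleftrightarrow> W \<subseteq> gfspace n q \<and> (\<lambda>_. 0) \<in> W \<and> (\<forall>a\<in>W. \<forall>b\<in>W. gf_add q a b \<in> W)"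

lemma gf_subgroup_gfspace: "q > 0 \<Longrightarrow> gf_subgroup n q (gfspace n q)"
  unfolding gf_subgroup_def gfspace_def gf_add_def by auto

lemma gf_subspace_imp_subgroup: "gf_subspace n q V \<Longrightarrow> gf_subgroup n q V"
  unfolding gf_subspace_def gf_subgroup_def gf_add_def by blast

lemma sum_character_gf:
  fixes \<psi> :: "(nat \<Rightarrow> int) \<Rightarrow> complex"
  assumes "gf_subgroup n q W"
    and mult: "\<And>a b. a \<in> W \<Longrightarrow> b \<in> W \<Longrightarrow> \<psi> (gf_add q a b) = \<psi> a * \<psi> b"
  shows "(\<Sum>w\<in>W. \<psi> w) = (if \<forall>w\<in>W. \<psi> w = 1 then of_nat (card W) else 0)"
proof (cases "\<forall>w\<in>W. \<psi> w = 1")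
  case False
  then obtain w0 where w0: "w0 \<in> W" "\<psi> w0 \<noteq> 1" by blast
  have W: "W \<subseteq> gfspace n q" and closed: "\<And>a b. a \<in> W \<Longrightarrow> b \<in> W \<Longrightarrow> gf_add q a b \<in> W"
    using assms(1) unfolding gf_subgroup_def by auto
  have "finite W" using finite_subset[OF W] by simp
  moreover have "inj_on (gf_add q w0) W"
    using inj_on_gf_add[of w0 n q] w0(1) W inj_on_subset by blast
  moreover have "gf_add q w0 ` W \<subseteq> W"
    using closed w0(1) by blast
  ultimately have "bij_betw (gf_add q w0) W W"
    using endo_inj_surj by (simp add: bij_betw_def)
  then have "(\<Sum>w\<in>W. \<psi> w) = 0"
    by (rule sum_eq_0_if_shift_scales[where c = "\<psi> w0"]) (use w0 mult in auto)
  with False show ?thesis by (simp only: if_not_P if_False)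
qed simp

lemma sum_omega_pow_dot:
  assumes "q > 0" "gf_subgroup n q W"
  shows "(\<Sum>w\<in>W. omega_pow q (dot n w x)) =
    (if \<forall>w\<in>W. int q dvd dot n w x then of_nat (card W) else 0)"
  using sum_character_gf[OF assms(2), of "\<lambda>w. omega_pow q (dot n w x)"]
  by (simp add: omega_pow_dot_gf_add[OF assms(1)] omega_pow_eq_1_iff[OF assms(1)])

lemma sum_omega_pow_minus_dot:
  assumes "q > 0" "gf_subgroup n q W"
  shows "(\<Sum>w\<in>W. omega_pow q (- dot n w x)) =
    (if \<forall>w\<in>W. int q dvd dot n w x then of_nat (card W) else 0)"
  using sum_character_gf[OF assms(2), of "\<lambda>w. omega_pow q (- dot n w x)"]
  by (simp add: omega_pow_minus_dot_gf_add[OF assms(1)] omega_pow_eq_1_iff[OF assms(1)])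

lemma gfspace_eq_if_dvd_dot:
  assumes "q > 1" "y \<in> gfspace n q" "z \<in> gfspace n q"
    and dvd: "\<forall>x\<in>gfspace n q. int q dvd dot n x (\<lambda>i. z i - y i)"
  shows "z = y"
proof
  fix i
  show "z i = y i"
  proof (cases "i < n")
    case True
    define e where "e = (\<lambda>j. if j = i then 1 else 0 :: int)"
    have "e \<in> gfspace n q" using True assms(1) unfolding e_def gfspace_def by auto
    then have "int q dvd dot n e (\<lambda>j. z j - y j)" using dvd by blast
    moreover have "dot n e (\<lambda>j. z j - y j) = (\<Sum>j<n. if j = i then z j - y j else 0)"
      unfolding e_def dot_def by (intro sum.cong) auto
    ultimately have "int q dvd z i - y i"
      using True by simp
    then have "z i mod int q = y i mod int q"
      by (simp add: mod_eq_dvd_iff)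
    with assms(2,3) show ?thesis by simp
  next
    case False
    then show ?thesis using assms(2,3) unfolding gfspace_def by simp
  qed
qed

definition dual_code :: "nat \<Rightarrow> nat \<Rightarrow> (nat \<Rightarrow> int) set \<Rightarrow> (nat \<Rightarrow> int) set" where
  "dual_code n q V = {x \<in> gfspace n q. \<forall>v\<in>V. int q dvd dot n v x}"

lemma card_mult_card_dual_code:
  assumes q: "q > 1" and V: "gf_subgroup n q V"
  shows "card V * card (dual_code n q V) = q ^ n"
proof -
  let ?G = "gfspace n q" and ?D = "dual_code n q V"
  have VG: "V \<subseteq> ?G" and V0: "(\<lambda>_. 0) \<in> V" using V unfolding gf_subgroup_def by auto
  have "(\<Sum>x\<in>?G. \<Sum>v\<in>V. omega_pow q (dot n v x)) = (\<Sum>x\<in>?G. if x \<in> ?D then of_nat (card V) else 0)"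
    using q by (intro sum.cong) (simp_all add: sum_omega_pow_dot[OF _ V] dual_code_def)
  also have "\<dots> = of_nat (card V * card ?D)"
    by (simp add: sum.If_cases dual_code_def Int_def)
  finally have by_dual: "(\<Sum>x\<in>?G. \<Sum>v\<in>V. omega_pow q (dot n v x)) = of_nat (card V * card ?D)" .
  have dvd_iff_zero: "(\<forall>x\<in>?G. int q dvd dot n x v) \<longleftrightarrow> v = (\<lambda>_. 0)" if "v \<in> V" for v
  proof
    assume "\<forall>x\<in>?G. int q dvd dot n x v"
    moreover have "(\<lambda>_. 0) \<in> ?G" using q by (simp add: gfspace_def)
    ultimately show "v = (\<lambda>_. 0)"
      using gfspace_eq_if_dvd_dot[OF q, where y = "\<lambda>_. 0" and z = v] that VG by auto
  qed (simp add: dot_def)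
  have "(\<Sum>v\<in>V. \<Sum>x\<in>?G. omega_pow q (dot n x v)) = (\<Sum>v\<in>V. if v = (\<lambda>_. 0) then of_nat (q ^ n) else 0)"
    using q by (intro sum.cong)
      (simp_all add: sum_omega_pow_dot[OF _ gf_subgroup_gfspace] card_gfspace dvd_iff_zero)
  also have "\<dots> = of_nat (q ^ n)"
    using V0 finite_subset[OF VG] by (simp add: sum.delta)
  finally have "(\<Sum>x\<in>?G. \<Sum>v\<in>V. omega_pow q (dot n v x)) = of_nat (q ^ n)"
    by (simp add: sum.swap[of _ ?G] dot_commute)
  with by_dual show ?thesis by (simp only: of_nat_eq_iff)
qed

text \<open>q^(n/2) times the inverse Fourier transform of the indicator of C.\<close>
definition code_transform :: "nat \<Rightarrow> nat \<Rightarrow> (nat \<Rightarrow> int) set \<Rightarrow> (nat \<Rightarrow> int) \<Rightarrow> complex" where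
  "code_transform n q C x = (\<Sum>y\<in>C. omega_pow q (- dot n y x))"

lemma code_transform_zero: "code_transform n q C (\<lambda>_. 0) = of_nat (card C)"
  unfolding code_transform_def dot_def by simp

lemma fsupp_code_transform_coset:
  assumes q: "q > 0" and V: "gf_subgroup n q V" and c: "c \<in> gfspace n q"
  shows "fsupp n q (code_transform n q (gf_add q c ` V)) \<subseteq> dual_code n q V"
proof
  fix x assume "x \<in> fsupp n q (code_transform n q (gf_add q c ` V))"
  then have x: "x \<in> gfspace n q" and nz: "code_transform n q (gf_add q c ` V) x \<noteq> 0"
    unfolding fsupp_def by auto
  have "inj_on (gf_add q c) V"
    using inj_on_gf_add[OF c] V inj_on_subset unfolding gf_subgroup_def by blast
  then have "code_transform n q (gf_add q c ` V) x = (\<Sum>v\<in>V. omega_pow q (- dot n (gf_add q c v) x))"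
    unfolding code_transform_def by (simp add: sum.reindex)
  also have "\<dots> = omega_pow q (- dot n c x) * (\<Sum>v\<in>V. omega_pow q (- dot n v x))"
    by (simp add: omega_pow_minus_dot_gf_add[OF q] sum_distrib_left)
  finally show "x \<in> dual_code n q V"
    using x nz by (auto simp: dual_code_def sum_omega_pow_minus_dot[OF q V] split: if_splits)
qed

lemma fourier_kernel_code_transform:
  assumes "q > 0"
  shows "omega_pow q (- dot n y x) * omega_pow q (ip n q x z) = omega_pow q (dot n x (\<lambda>i. z i - y i))"
proof -
  have "omega_pow q (ip n q x z) = omega_pow q (dot n x z)"
    using assms by (intro omega_pow_cong) (simp_all add: ip_def dot_def)
  then show ?thesis
    by (simp add: omega_pow_add[symmetric] dot_diff_right dot_commute[of n y])
qed

lemma fsupp_fourier_code_transform: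
  assumes q: "q > 1" and C: "C \<subseteq> gfspace n q"
  shows "fsupp n q (fourier n q (code_transform n q C)) \<subseteq> C"
proof
  let ?G = "gfspace n q"
  have q0: "q > 0" using q by simp
  fix z assume "z \<in> fsupp n q (fourier n q (code_transform n q C))"
  then have z: "z \<in> ?G" and nz: "fourier n q (code_transform n q C) z \<noteq> 0"
    unfolding fsupp_def by auto
  show "z \<in> C"
  proof (rule ccontr)
    assume "z \<notin> C"
    have "(\<Sum>x\<in>?G. code_transform n q C x * omega_pow q (ip n q x z)) =
        (\<Sum>y\<in>C. \<Sum>x\<in>?G. omega_pow q (dot n x (\<lambda>i. z i - y i)))"
      unfolding code_transform_def sum_distrib_right
      using q by (simp add: fourier_kernel_code_transform sum.swap[of _ ?G])
    also have "\<dots> = 0"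
    proof (rule sum.neutral, rule ballI)
      fix y assume "y \<in> C"
      then have "\<not> (\<forall>x\<in>?G. int q dvd dot n x (\<lambda>i. z i - y i))"
        using gfspace_eq_if_dvd_dot[OF q _ z] C \<open>z \<notin> C\<close> by blast
      then show "(\<Sum>x\<in>?G. omega_pow q (dot n x (\<lambda>i. z i - y i))) = 0"
        by (simp only: sum_omega_pow_dot[OF q0 gf_subgroup_gfspace[OF q0]] if_not_P if_False)
    qed
    finally have "fourier n q (code_transform n q C) z = 0"
      unfolding fourier_def by simp
    with nz show False by simp
  qed
qed

lemma Lmin_le_card_fsupp:
  assumes "fsupp n q f \<noteq> {}" "fsupp n q (fourier n q f) \<subseteq> weight_union n q I"
  shows "Lmin n q I \<le> card (fsupp n q f)"
  unfolding Lmin_def using assms by (intro cInf_lower) auto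

lemma Lmin_pos:
  assumes "fsupp n q f \<noteq> {}" "fsupp n q (fourier n q f) \<subseteq> weight_union n q I"
  shows "0 < Lmin n q I"
proof -
  let ?L = "{card (fsupp n q g) | g. fsupp n q g \<noteq> {} \<and> fsupp n q (fourier n q g) \<subseteq> weight_union n q I}"
  have "Inf ?L \<in> ?L"
    using assms by (intro Inf_nat_def1) blast
  then obtain g where "Lmin n q I = card (fsupp n q g)" "fsupp n q g \<noteq> {}"
    unfolding Lmin_def by auto
  moreover have "finite (fsupp n q g)"
    unfolding fsupp_def by simp
  ultimately show ?thesis by (simp add: card_gt_0_iff)
qed

lemma affine_code_cosetE:
  assumes "q > 0" "affine_code n q C"
  obtains c V where "c \<in> gfspace n q" "gf_subgroup n q V" "C = gf_add q c ` V"
    "C \<subseteq> gfspace n q" "card C = card V" "C \<noteq> {}"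
proof -
  obtain c V where c: "c \<in> gfspace n q" and V: "gf_subgroup n q V" and C: "C = gf_add q c ` V"
    using assms(2) gf_subspace_imp_subgroup unfolding affine_code_def gf_add_def by blast
  have VG: "V \<subseteq> gfspace n q" and "(\<lambda>_. 0) \<in> V" using V unfolding gf_subgroup_def by auto
  have "C \<subseteq> gfspace n q" using C c VG gf_add_in_gfspace assms(1) by auto
  moreover have "card C = card V"
    unfolding C using inj_on_gf_add[OF c] VG by (intro card_image) (rule inj_on_subset)
  moreover have "C \<noteq> {}" using C \<open>(\<lambda>_. 0) \<in> V\<close> by blast
  ultimately show ?thesis using that c V C by blast
qed

lemma zero_in_fsupp_code_transform:
  assumes "q > 0" "C \<subseteq> gfspace n q" "C \<noteq> {}"
  shows "(\<lambda>_. 0) \<in> fsupp n q (code_transform n q C)"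
proof -
  have "card C \<noteq> 0" using assms(2,3) finite_subset[OF assms(2)] by simp
  then show ?thesis
    using assms(1) by (simp add: fsupp_def gfspace_def code_transform_zero)
qed

theorem corollary4:
  fixes n q :: nat and I :: "nat set" and C :: "(nat \<Rightarrow> int) set"
  assumes "prime q"
    and "finite I"
    and "affine_code n q C"
    and "C \<subseteq> weight_union n q I"
  shows "real (card C) \<le> real q ^ n / real (Lmin n q I)"
proof -
  have q: "q > 1" using assms(1) by (rule prime_gt_1_nat)
  then obtain c V where c: "c \<in> gfspace n q" and V: "gf_subgroup n q V" and C: "C = gf_add q c ` V"
    and CG: "C \<subseteq> gfspace n q" and card_C: "card C = card V" and "C \<noteq> {}"
    using affine_code_cosetE[OF _ assms(3)] by auto
  let ?f = "code_transform n q C"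
  have supp_ne: "fsupp n q ?f \<noteq> {}"
    using zero_in_fsupp_code_transform[OF _ CG \<open>C \<noteq> {}\<close>] q by auto
  have supp_hat: "fsupp n q (fourier n q ?f) \<subseteq> weight_union n q I"
    using fsupp_fourier_code_transform[OF q CG] assms(4) by blast
  have "Lmin n q I \<le> card (fsupp n q ?f)"
    by (rule Lmin_le_card_fsupp[OF supp_ne supp_hat])
  also have "\<dots> \<le> card (dual_code n q V)"
    using fsupp_code_transform_coset[OF _ V c] q C by (intro card_mono) (auto simp: dual_code_def)
  finally have "card C * Lmin n q I \<le> q ^ n"
    using card_mult_card_dual_code[OF q V] card_C by (metis mult_le_mono2)
  then have "real (card C) * real (Lmin n q I) \<le> real q ^ n"
    by (metis of_nat_le_iff of_nat_mult of_nat_power)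
  then show ?thesis
    using Lmin_pos[OF supp_ne supp_hat] by (simp add: pos_le_divide_eq)
qed

end
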